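(* Let $k$ be an infinite field of characteristic $0$. (i) If $W=W(X,Y)\in\Xi'$, $H=(L,V)\in\Xi$, and $(T_1,T_2)$ is an $H$-closed congruence of $W$, then $T_1\oplus T_2\subseteq\mathcal{F}(W)$ is an $\mathcal{F}(H)$-closed congruence. (ii) If $F(M)\in\mathrm{Ob}\,\Theta^0$, $(N,p)\in\Theta$, and $T\subseteq F(M)$ is an $N$-closed congruence, then $(T\cap\ker p,\,T\cap\mathrm{im}\,p)\subseteq\mathcal{F}^{-1}(F(M))$ is an $\mathcal{F}^{-1}(N)$-closed congruence (here $p$ in $\ker p$, $\mathrm{im}\,p$ is the projection of $F(M)$). (iii) The maps $\mathcal{F}_{W,H}:Cl_H(W)\to Cl_{\mathcal{F}(H)}(\mathcal{F}(W))$, $(T_1,T_2)\mapsto T_1\oplus T_2$, and $\mathcal{F}^{-1}_{F(M),N}:Cl_N(F(M))\to Cl_{\mathcal{F}^{-1}(N)}(\mathcal{F}^{-1}(F(M)))$, $T\mapsto(T\cap\ker p,T\cap\mathrm{im}\,p)$, are bijections.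
   Context: Representations $(L,V)$ (Lie algebra $L$ over $k$, $L$-module $V$) with homomorphisms $(\varphi,\psi)$ ($\varphi$ Lie homomorphism, $\psi$ linear, $\varphi(l)\circ\psi(v)=\psi(l\circ v)$) form $\Xi$. $W(X,Y)=(L(X),A(X)Y)$ is the free representation ($L(X)$ free Lie algebra, $A(X)$ free unital associative algebra, $A(X)Y$ free $A(X)$-module with basis $Y$); $\Xi'$ is the set of $W(X,Y)$ with $X,Y$ finite subsets of fixed countable sets and $|X|=|Y|$. A Lie algebra with projection-derivation is a Lie algebra $M$ with linear $p$, $p^2=p$, $p[m_1,m_2]=[pm_1,m_2]+[m_1,pm_2]$; these form the variety $\Theta$ (homomorphisms commute with $p$), and $\Theta^0$ consists of the free algebras $F(M)$ of $\Theta$ on finite subsets $M$ of a fixed countable set. $\mathcal{F}(L,V)=(L\oplus V,p_V)$ with $[l_1+v_1,l_2+v_2]=[l_1,l_2]+l_1\circ v_2-l_2\circ v_1$, $p_V(l+v)=v$; $\mathcal{F}^{-1}(M,p)=(\ker p,\mathrm{im}\,p)$ with $l\circ v=[l,v]$. Closedness: for an algebra $H$ and a free object $W$ (of either kind) and a subset $T$ of $W$ (a pair $(T_1,T_2)$ of subsets of the two sorts in the representation case), $T'_H$ is the set of homomorphisms $W\to H$ whose kernel contains $T$ (sortwise), $T''_H$ is the (sortwise) intersection of their kernels, $T$ is $H$-closed if $T''_H=T$, and $Cl_H(W)$ is the set of $H$-closed subsets of $W$. *)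

theory Defs
  imports Main
begin

text \<open>All structures are over a field 'k and are given by a carrier set together with
operations (so that several structures on the same HOL type, e.g. subalgebras, can be
handled).\<close>

record ('k, 'a) vs =
  vcarrier :: "'a set"
  vadd :: "'a \<Rightarrow> 'a \<Rightarrow> 'a"
  vzero :: "'a"
  vsmul :: "'k \<Rightarrow> 'a \<Rightarrow> 'a"

record ('k, 'a) lie = "('k, 'a) vs" +
  lbr :: "'a \<Rightarrow> 'a \<Rightarrow> 'a"

record ('k, 'a) theta = "('k, 'a) lie" +
  tproj :: "'a \<Rightarrow> 'a"

record ('k, 'l, 'v) rep =
  rlie :: "('k, 'l) lie"
  rmod :: "('k, 'v) vs"
  ract :: "'l \<Rightarrow> 'v \<Rightarrow> 'v"

definition vsub :: "('k::field, 'a, 'c) vs_scheme \<Rightarrow> 'a \<Rightarrow> 'a \<Rightarrow> 'a" where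
  "vsub V x y = vadd V x (vsmul V (- 1) y)"

definition vs_ax :: "('k::field, 'a, 'c) vs_scheme \<Rightarrow> bool" where
  "vs_ax V \<longleftrightarrow>
     vzero V \<in> vcarrier V \<and>
     (\<forall>x\<in>vcarrier V. \<forall>y\<in>vcarrier V. vadd V x y \<in> vcarrier V) \<and>
     (\<forall>a. \<forall>x\<in>vcarrier V. vsmul V a x \<in> vcarrier V) \<and>
     (\<forall>x\<in>vcarrier V. \<forall>y\<in>vcarrier V. \<forall>z\<in>vcarrier V.
        vadd V (vadd V x y) z = vadd V x (vadd V y z)) \<and>
     (\<forall>x\<in>vcarrier V. \<forall>y\<in>vcarrier V. vadd V x y = vadd V y x) \<and>
     (\<forall>x\<in>vcarrier V. vadd V (vzero V) x = x) \<and>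
     (\<forall>x\<in>vcarrier V. \<exists>y\<in>vcarrier V. vadd V x y = vzero V) \<and>
     (\<forall>a. \<forall>x\<in>vcarrier V. \<forall>y\<in>vcarrier V.
        vsmul V a (vadd V x y) = vadd V (vsmul V a x) (vsmul V a y)) \<and>
     (\<forall>a b. \<forall>x\<in>vcarrier V. vsmul V (a + b) x = vadd V (vsmul V a x) (vsmul V b x)) \<and>
     (\<forall>a b. \<forall>x\<in>vcarrier V. vsmul V (a * b) x = vsmul V a (vsmul V b x)) \<and>
     (\<forall>x\<in>vcarrier V. vsmul V 1 x = x)"

definition lie_ax :: "('k::field, 'a, 'c) lie_scheme \<Rightarrow> bool" where
  "lie_ax L \<longleftrightarrow> vs_ax L \<and>
     (\<forall>x\<in>vcarrier L. \<forall>y\<in>vcarrier L. lbr L x y \<in> vcarrier L) \<and>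
     (\<forall>x\<in>vcarrier L. \<forall>y\<in>vcarrier L. \<forall>z\<in>vcarrier L.
        lbr L (vadd L x y) z = vadd L (lbr L x z) (lbr L y z) \<and>
        lbr L z (vadd L x y) = vadd L (lbr L z x) (lbr L z y)) \<and>
     (\<forall>a. \<forall>x\<in>vcarrier L. \<forall>y\<in>vcarrier L.
        lbr L (vsmul L a x) y = vsmul L a (lbr L x y) \<and>
        lbr L x (vsmul L a y) = vsmul L a (lbr L x y)) \<and>
     (\<forall>x\<in>vcarrier L. lbr L x x = vzero L) \<and>
     (\<forall>x\<in>vcarrier L. \<forall>y\<in>vcarrier L. \<forall>z\<in>vcarrier L.
        vadd L (vadd L (lbr L x (lbr L y z)) (lbr L y (lbr L z x))) (lbr L z (lbr L x y))
          = vzero L)"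

definition theta_alg :: "('k::field, 'a) theta \<Rightarrow> bool" where
  "theta_alg N \<longleftrightarrow> lie_ax N \<and>
     (\<forall>x\<in>vcarrier N. tproj N x \<in> vcarrier N) \<and>
     (\<forall>x\<in>vcarrier N. \<forall>y\<in>vcarrier N. tproj N (vadd N x y) = vadd N (tproj N x) (tproj N y)) \<and>
     (\<forall>a. \<forall>x\<in>vcarrier N. tproj N (vsmul N a x) = vsmul N a (tproj N x)) \<and>
     (\<forall>x\<in>vcarrier N. tproj N (tproj N x) = tproj N x) \<and>
     (\<forall>x\<in>vcarrier N. \<forall>y\<in>vcarrier N.
        tproj N (lbr N x y) = vadd N (lbr N (tproj N x) y) (lbr N x (tproj N y)))"

definition rep_alg :: "('k::field, 'l, 'v) rep \<Rightarrow> bool" where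
  "rep_alg R \<longleftrightarrow> lie_ax (rlie R) \<and> vs_ax (rmod R) \<and>
     (\<forall>l\<in>vcarrier (rlie R). \<forall>v\<in>vcarrier (rmod R). ract R l v \<in> vcarrier (rmod R)) \<and>
     (\<forall>l1\<in>vcarrier (rlie R). \<forall>l2\<in>vcarrier (rlie R). \<forall>v\<in>vcarrier (rmod R).
        ract R (vadd (rlie R) l1 l2) v = vadd (rmod R) (ract R l1 v) (ract R l2 v) \<and>
        ract R (lbr (rlie R) l1 l2) v
          = vsub (rmod R) (ract R l1 (ract R l2 v)) (ract R l2 (ract R l1 v))) \<and>
     (\<forall>l\<in>vcarrier (rlie R). \<forall>v\<in>vcarrier (rmod R). \<forall>w\<in>vcarrier (rmod R).
        ract R l (vadd (rmod R) v w) = vadd (rmod R) (ract R l v) (ract R l w)) \<and>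
     (\<forall>a. \<forall>l\<in>vcarrier (rlie R). \<forall>v\<in>vcarrier (rmod R).
        ract R (vsmul (rlie R) a l) v = vsmul (rmod R) a (ract R l v) \<and>
        ract R l (vsmul (rmod R) a v) = vsmul (rmod R) a (ract R l v))"

definition lin_map :: "('k::field, 'a, 'c) vs_scheme \<Rightarrow> ('k, 'b, 'd) vs_scheme \<Rightarrow> ('a \<Rightarrow> 'b) \<Rightarrow> bool" where
  "lin_map V W f \<longleftrightarrow> f ` vcarrier V \<subseteq> vcarrier W \<and>
     (\<forall>x\<in>vcarrier V. \<forall>y\<in>vcarrier V. f (vadd V x y) = vadd W (f x) (f y)) \<and>
     (\<forall>a. \<forall>x\<in>vcarrier V. f (vsmul V a x) = vsmul W a (f x))"

definition lie_hom :: "('k::field, 'a, 'c) lie_scheme \<Rightarrow> ('k, 'b, 'd) lie_scheme \<Rightarrow> ('a \<Rightarrow> 'b) \<Rightarrow> bool" where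
  "lie_hom L L' f \<longleftrightarrow> lin_map L L' f \<and>
     (\<forall>x\<in>vcarrier L. \<forall>y\<in>vcarrier L. f (lbr L x y) = lbr L' (f x) (f y))"

definition theta_hom :: "('k::field, 'a) theta \<Rightarrow> ('k, 'b) theta \<Rightarrow> ('a \<Rightarrow> 'b) \<Rightarrow> bool" where
  "theta_hom A B f \<longleftrightarrow> lie_hom A B f \<and> (\<forall>x\<in>vcarrier A. f (tproj A x) = tproj B (f x))"

definition rep_hom :: "('k::field, 'l, 'v) rep \<Rightarrow> ('k, 'l2, 'v2) rep \<Rightarrow> ('l \<Rightarrow> 'l2) \<Rightarrow> ('v \<Rightarrow> 'v2) \<Rightarrow> bool" where
  "rep_hom R R' \<phi> \<psi> \<longleftrightarrow> lie_hom (rlie R) (rlie R') \<phi> \<and> lin_map (rmod R) (rmod R') \<psi> \<and>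
     (\<forall>l\<in>vcarrier (rlie R). \<forall>v\<in>vcarrier (rmod R). ract R' (\<phi> l) (\<psi> v) = \<psi> (ract R l v))"

definition vker :: "('k, 'a, 'c) vs_scheme \<Rightarrow> ('k, 'b, 'd) vs_scheme \<Rightarrow> ('a \<Rightarrow> 'b) \<Rightarrow> 'a set" where
  "vker V W f = {x \<in> vcarrier V. f x = vzero W}"

section \<open>Congruences (described by their zero classes, i.e. ideals)\<close>

definition subspace :: "('k::field, 'a, 'c) vs_scheme \<Rightarrow> 'a set \<Rightarrow> bool" where
  "subspace V S \<longleftrightarrow> S \<subseteq> vcarrier V \<and> vzero V \<in> S \<and>
     (\<forall>x\<in>S. \<forall>y\<in>S. vadd V x y \<in> S) \<and> (\<forall>a. \<forall>x\<in>S. vsmul V a x \<in> S)"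

definition lie_ideal :: "('k::field, 'a, 'c) lie_scheme \<Rightarrow> 'a set \<Rightarrow> bool" where
  "lie_ideal L T \<longleftrightarrow> subspace L T \<and>
     (\<forall>x\<in>vcarrier L. \<forall>t\<in>T. lbr L x t \<in> T \<and> lbr L t x \<in> T)"

definition theta_cong :: "('k::field, 'a) theta \<Rightarrow> 'a set \<Rightarrow> bool" where
  "theta_cong A T \<longleftrightarrow> lie_ideal A T \<and> (\<forall>t\<in>T. tproj A t \<in> T)"

definition rep_cong :: "('k::field, 'l, 'v) rep \<Rightarrow> 'l set \<times> 'v set \<Rightarrow> bool" where
  "rep_cong R T \<longleftrightarrow> lie_ideal (rlie R) (fst T) \<and> subspace (rmod R) (snd T) \<and>
     (\<forall>l\<in>vcarrier (rlie R). \<forall>t\<in>snd T. ract R l t \<in> snd T) \<and>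
     (\<forall>t\<in>fst T. \<forall>v\<in>vcarrier (rmod R). ract R t v \<in> snd T)"

definition theta_closure :: "('k::field, 'a) theta \<Rightarrow> ('k, 'b) theta \<Rightarrow> 'a set \<Rightarrow> 'a set" where
  "theta_closure A N T =
     {x \<in> vcarrier A. \<forall>h. theta_hom A N h \<and> T \<subseteq> vker A N h \<longrightarrow> h x = vzero N}"

definition Cl_theta :: "('k::field, 'a) theta \<Rightarrow> ('k, 'b) theta \<Rightarrow> 'a set set" where
  "Cl_theta A N = {T. theta_closure A N T = T}"

definition rep_closure :: "('k::field, 'l, 'v) rep \<Rightarrow> ('k, 'l2, 'v2) rep \<Rightarrow> 'l set \<times> 'v set \<Rightarrow> 'l set \<times> 'v set" where
  "rep_closure R H T =
     ({l \<in> vcarrier (rlie R). \<forall>\<phi> \<psi>. rep_hom R H \<phi> \<psi> \<and> fst T \<subseteq> vker (rlie R) (rlie H) \<phi>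
          \<and> snd T \<subseteq> vker (rmod R) (rmod H) \<psi> \<longrightarrow> \<phi> l = vzero (rlie H)},
      {v \<in> vcarrier (rmod R). \<forall>\<phi> \<psi>. rep_hom R H \<phi> \<psi> \<and> fst T \<subseteq> vker (rlie R) (rlie H) \<phi>
          \<and> snd T \<subseteq> vker (rmod R) (rmod H) \<psi> \<longrightarrow> \<psi> v = vzero (rmod H)})"

definition Cl_rep :: "('k::field, 'l, 'v) rep \<Rightarrow> ('k, 'l2, 'v2) rep \<Rightarrow> ('l set \<times> 'v set) set" where
  "Cl_rep R H = {T. rep_closure R H T = T}"

definition Frep :: "('k::field, 'l, 'v) rep \<Rightarrow> ('k, 'l \<times> 'v) theta" where
  "Frep R = \<lparr> vcarrier = vcarrier (rlie R) \<times> vcarrier (rmod R),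
     vadd = (\<lambda>(l1, v1) (l2, v2). (vadd (rlie R) l1 l2, vadd (rmod R) v1 v2)),
     vzero = (vzero (rlie R), vzero (rmod R)),
     vsmul = (\<lambda>a (l, v). (vsmul (rlie R) a l, vsmul (rmod R) a v)),
     lbr = (\<lambda>(l1, v1) (l2, v2). (lbr (rlie R) l1 l2,
                                 vsub (rmod R) (ract R l1 v2) (ract R l2 v1))),
     tproj = (\<lambda>(l, v). (vzero (rlie R), v)) \<rparr>"

definition pker :: "('k, 'a) theta \<Rightarrow> 'a set" where
  "pker N = {x \<in> vcarrier N. tproj N x = vzero N}"

definition pim :: "('k, 'a) theta \<Rightarrow> 'a set" where
  "pim N = tproj N ` vcarrier N"

definition Finv :: "('k::field, 'a) theta \<Rightarrow> ('k, 'a, 'a) rep" where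
  "Finv N = \<lparr> rlie = \<lparr> vcarrier = pker N, vadd = vadd N, vzero = vzero N, vsmul = vsmul N,
                        lbr = lbr N \<rparr>,
              rmod = \<lparr> vcarrier = pim N, vadd = vadd N, vzero = vzero N, vsmul = vsmul N \<rparr>,
              ract = lbr N \<rparr>"

text \<open>\<open>A(X)\<close>: noncommutative polynomials in the letters \<open>X \<subseteq> nat\<close>, as finitely supported
coefficient functions on words; \<open>A(X)Y\<close>: the free \<open>A(X)\<close>-module with basis \<open>Y \<subseteq> nat\<close>,
as finitely supported coefficient functions on pairs (word, basis element).\<close>

definition Apoly :: "nat set \<Rightarrow> (nat list \<Rightarrow> 'k::field) set" where
  "Apoly X = {f. finite {w. f w \<noteq> 0} \<and> (\<forall>w. f w \<noteq> 0 \<longrightarrow> set w \<subseteq> X)}"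

definition Amod :: "nat set \<Rightarrow> nat set \<Rightarrow> (nat list \<times> nat \<Rightarrow> 'k::field) set" where
  "Amod X Y = {m. finite {u. m u \<noteq> 0} \<and> (\<forall>w y. m (w, y) \<noteq> 0 \<longrightarrow> set w \<subseteq> X \<and> y \<in> Y)}"

definition amul :: "(nat list \<Rightarrow> 'k::field) \<Rightarrow> (nat list \<Rightarrow> 'k) \<Rightarrow> nat list \<Rightarrow> 'k" where
  "amul f g = (\<lambda>w. \<Sum>i\<le>length w. f (take i w) * g (drop i w))"

definition aact :: "(nat list \<Rightarrow> 'k::field) \<Rightarrow> (nat list \<times> nat \<Rightarrow> 'k) \<Rightarrow> nat list \<times> nat \<Rightarrow> 'k" where
  "aact f m = (\<lambda>(w, y). \<Sum>i\<le>length w. f (take i w) * m (drop i w, y))"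

definition agen :: "nat \<Rightarrow> nat list \<Rightarrow> 'k::field" where
  "agen x = (\<lambda>w. if w = [x] then 1 else 0)"

text \<open>\<open>L(X)\<close>: the Lie subalgebra of \<open>A(X)\<close> (commutator bracket) generated by \<open>X\<close>;
this is the free Lie algebra on \<open>X\<close>.\<close>
inductive_set freeLie :: "nat set \<Rightarrow> (nat list \<Rightarrow> 'k::field) set" for X where
  gen: "x \<in> X \<Longrightarrow> agen x \<in> freeLie X"
| zero: "(\<lambda>w. 0) \<in> freeLie X"
| add: "f \<in> freeLie X \<Longrightarrow> g \<in> freeLie X \<Longrightarrow> (\<lambda>w. f w + g w) \<in> freeLie X"
| smul: "f \<in> freeLie X \<Longrightarrow> (\<lambda>w. a * f w) \<in> freeLie X"
| br: "f \<in> freeLie X \<Longrightarrow> g \<in> freeLie X \<Longrightarrow> (\<lambda>w. amul f g w - amul g f w) \<in> freeLie X"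

definition Wrep :: "nat set \<Rightarrow> nat set \<Rightarrow> ('k::field, nat list \<Rightarrow> 'k, nat list \<times> nat \<Rightarrow> 'k) rep" where
  "Wrep X Y = \<lparr> rlie = \<lparr> vcarrier = freeLie X, vadd = (\<lambda>f g w. f w + g w), vzero = (\<lambda>w. 0),
                         vsmul = (\<lambda>a f w. a * f w), lbr = (\<lambda>f g w. amul f g w - amul g f w) \<rparr>,
                rmod = \<lparr> vcarrier = Amod X Y, vadd = (\<lambda>f g u. f u + g u), vzero = (\<lambda>u. 0),
                         vsmul = (\<lambda>a f u. a * f u) \<rparr>,
                ract = aact \<rparr>"

text \<open>\<open>F\<close> (with embedding \<open>\<iota>\<close>) is free over \<open>M\<close> with respect to all \<open>\<Theta>\<close>-algebras whose
underlying HOL type is \<open>'b\<close> (HOL cannot quantify over all types inside a formula).\<close>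
definition theta_free :: "'b itself \<Rightarrow> ('k::field, 'a) theta \<Rightarrow> nat set \<Rightarrow> (nat \<Rightarrow> 'a) \<Rightarrow> bool" where
  "theta_free _ F M \<iota> \<longleftrightarrow> theta_alg F \<and> \<iota> ` M \<subseteq> vcarrier F \<and>
     (\<forall>(N :: ('k, 'b) theta) f. theta_alg N \<and> f ` M \<subseteq> vcarrier N \<longrightarrow>
        (\<exists>h. theta_hom F N h \<and> (\<forall>m\<in>M. h (\<iota> m) = f m) \<and>
             (\<forall>h'. theta_hom F N h' \<and> (\<forall>m\<in>M. h' (\<iota> m) = f m) \<longrightarrow>
                   (\<forall>x\<in>vcarrier F. h' x = h x))))"

end

theory Submission
  imports Defs
begin

text \<open>
  A \<open>\<Theta>\<close>-homomorphism \<open>\<F>(R) \<rightarrow> \<F>(H)\<close> commutes with the projections onto the module parts,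
  so it is \<open>\<phi> \<times> \<psi>\<close> for a homomorphism \<open>(\<phi>, \<psi>)\<close> of representations, and every such
  \<open>\<phi> \<times> \<psi>\<close> is a \<open>\<Theta>\<close>-homomorphism. Hence the closure of \<open>S \<subseteq> L \<oplus> V\<close> is the product of
  the closures of its two projections, which gives (i) and the first bijection.

  A Lie algebra with projection-derivation \<open>p\<close> splits as \<open>ker p \<oplus> im p\<close>, with
  \<open>[im p, im p] = 0\<close> once \<open>2 \<noteq> 0\<close>. Therefore a homomorphism
  \<open>(\<phi>, \<psi>)\<close> of the \<open>\<F>\<^sup>-\<^sup>1\<close>-representations glues to the \<open>\<Theta>\<close>-homomorphism
  \<open>x \<mapsto> \<phi>(x - p x) + \<psi>(p x)\<close>, while \<open>\<Theta>\<close>-homomorphisms restrict to homomorphisms of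
  representations. So closed sets correspond via \<open>T \<mapsto> (T \<inter> ker p, T \<inter> im p)\<close>, with inverse
  \<open>(K, I) \<mapsto> (K \<union> I)''\<close>, which gives (ii) and the second bijection.
\<close>

section \<open>Vector spaces, Lie algebras and projection-derivations\<close>

locale vspace =
  fixes V :: "('k::field, 'a, 'c) vs_scheme"
  assumes vs_ax: "vs_ax V"
begin

lemma zero_closed [simp]: "vzero V \<in> vcarrier V"
  and add_closed [simp]: "x \<in> vcarrier V \<Longrightarrow> y \<in> vcarrier V \<Longrightarrow> vadd V x y \<in> vcarrier V"
  and smul_closed [simp]: "x \<in> vcarrier V \<Longrightarrow> vsmul V a x \<in> vcarrier V"
  and add_assoc: "x \<in> vcarrier V \<Longrightarrow> y \<in> vcarrier V \<Longrightarrow> z \<in> vcarrier V \<Longrightarrow>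
         vadd V (vadd V x y) z = vadd V x (vadd V y z)"
  and add_commute: "x \<in> vcarrier V \<Longrightarrow> y \<in> vcarrier V \<Longrightarrow> vadd V x y = vadd V y x"
  and add_zero_left [simp]: "x \<in> vcarrier V \<Longrightarrow> vadd V (vzero V) x = x"
  and add_inverse_ex: "x \<in> vcarrier V \<Longrightarrow> \<exists>y\<in>vcarrier V. vadd V x y = vzero V"
  and smul_add: "x \<in> vcarrier V \<Longrightarrow> y \<in> vcarrier V \<Longrightarrow>
         vsmul V a (vadd V x y) = vadd V (vsmul V a x) (vsmul V a y)"
  and add_smul: "x \<in> vcarrier V \<Longrightarrow> vsmul V (a + b) x = vadd V (vsmul V a x) (vsmul V b x)"
  and smul_mult: "x \<in> vcarrier V \<Longrightarrow> vsmul V (a * b) x = vsmul V a (vsmul V b x)"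
  and smul_one [simp]: "x \<in> vcarrier V \<Longrightarrow> vsmul V 1 x = x"
  using vs_ax unfolding vs_ax_def by meson+

lemma add_zero_right [simp]: "x \<in> vcarrier V \<Longrightarrow> vadd V x (vzero V) = x"
  using add_commute[of x "vzero V"] by simp

lemma add_left_cancel:
  assumes "x \<in> vcarrier V" "y \<in> vcarrier V" "z \<in> vcarrier V" "vadd V x y = vadd V x z"
  shows "y = z"
proof -
  obtain n where n: "n \<in> vcarrier V" "vadd V n x = vzero V"
    using add_inverse_ex assms(1) add_commute by metis
  have "y = vadd V (vadd V n x) y" using n assms by simp
  also have "\<dots> = vadd V n (vadd V x z)" using add_assoc[of n x y] n assms by simp
  also have "\<dots> = vadd V (vadd V n x) z" using add_assoc[of n x z] n assms by metis
  also have "\<dots> = z" using n assms by simp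
  finally show ?thesis .
qed

lemma add_self_eq_zero: "x \<in> vcarrier V \<Longrightarrow> vadd V x x = x \<Longrightarrow> x = vzero V"
  using add_left_cancel[of x x "vzero V"] by simp

lemma smul_zero [simp]: "vsmul V a (vzero V) = vzero V"
  by (rule add_self_eq_zero) (simp_all flip: smul_add)

lemma smul_zero_left [simp]: "x \<in> vcarrier V \<Longrightarrow> vsmul V 0 x = vzero V"
  by (rule add_self_eq_zero) (simp_all flip: add_smul)

lemma add_neg_right: "x \<in> vcarrier V \<Longrightarrow> vadd V x (vsmul V (- 1) x) = vzero V"
  using add_smul[of x 1 "- 1"] by simp

lemma add_neg_left: "x \<in> vcarrier V \<Longrightarrow> vadd V (vsmul V (- 1) x) x = vzero V"
  using add_neg_right add_commute[of x "vsmul V (- 1) x"] by simp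

lemma sub_closed [simp]: "x \<in> vcarrier V \<Longrightarrow> y \<in> vcarrier V \<Longrightarrow> vsub V x y \<in> vcarrier V"
  unfolding vsub_def by simp

lemma sub_self [simp]: "x \<in> vcarrier V \<Longrightarrow> vsub V x x = vzero V"
  unfolding vsub_def by (rule add_neg_right)

lemma sub_zero [simp]: "x \<in> vcarrier V \<Longrightarrow> vsub V x (vzero V) = x"
  unfolding vsub_def by simp

lemma sub_add_cancel: "x \<in> vcarrier V \<Longrightarrow> y \<in> vcarrier V \<Longrightarrow> vadd V (vsub V x y) y = x"
  unfolding vsub_def using add_assoc add_neg_left by simp

lemma add_sub_cancel: "x \<in> vcarrier V \<Longrightarrow> y \<in> vcarrier V \<Longrightarrow> vsub V (vadd V x y) y = x"
  unfolding vsub_def using add_assoc add_neg_right by simp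

lemma add_add_swap:
  assumes "a \<in> vcarrier V" "b \<in> vcarrier V" "c \<in> vcarrier V" "d \<in> vcarrier V"
  shows "vadd V (vadd V a b) (vadd V c d) = vadd V (vadd V a c) (vadd V b d)"
proof -
  have "vadd V (vadd V a b) (vadd V c d) = vadd V a (vadd V (vadd V b c) d)"
    using assms add_assoc by simp
  also have "vadd V b c = vadd V c b" using assms add_commute by simp
  finally show ?thesis using assms add_assoc by simp
qed

lemma neg_unique:
  "x \<in> vcarrier V \<Longrightarrow> y \<in> vcarrier V \<Longrightarrow> vadd V x y = vzero V \<Longrightarrow> y = vsmul V (- 1) x"
  using add_left_cancel[of x y "vsmul V (- 1) x"] add_neg_right by simp

end

locale lie_alg =
  fixes L :: "('k::field, 'a, 'c) lie_scheme"
  assumes lie_ax: "lie_ax L"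

sublocale lie_alg \<subseteq> vspace L
  using lie_ax unfolding lie_ax_def by unfold_locales blast

context lie_alg
begin

lemma lbr_closed [simp]: "x \<in> vcarrier L \<Longrightarrow> y \<in> vcarrier L \<Longrightarrow> lbr L x y \<in> vcarrier L"
  and lbr_add_left: "x \<in> vcarrier L \<Longrightarrow> y \<in> vcarrier L \<Longrightarrow> z \<in> vcarrier L \<Longrightarrow>
         lbr L (vadd L x y) z = vadd L (lbr L x z) (lbr L y z)"
  and lbr_add_right: "x \<in> vcarrier L \<Longrightarrow> y \<in> vcarrier L \<Longrightarrow> z \<in> vcarrier L \<Longrightarrow>
         lbr L z (vadd L x y) = vadd L (lbr L z x) (lbr L z y)"
  and lbr_self: "x \<in> vcarrier L \<Longrightarrow> lbr L x x = vzero L"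
  using lie_ax unfolding lie_ax_def by meson+

lemma lbr_zero_right [simp]: "x \<in> vcarrier L \<Longrightarrow> lbr L x (vzero L) = vzero L"
  by (rule add_self_eq_zero) (simp_all flip: lbr_add_right)

lemma lbr_zero_left [simp]: "x \<in> vcarrier L \<Longrightarrow> lbr L (vzero L) x = vzero L"
  by (rule add_self_eq_zero) (simp_all flip: lbr_add_left)

lemma lbr_antisym:
  assumes "x \<in> vcarrier L" "y \<in> vcarrier L"
  shows "lbr L x y = vsmul L (- 1) (lbr L y x)"
proof -
  have "vzero L = lbr L (vadd L y x) (vadd L y x)" using lbr_self assms by simp
  also have "\<dots> = vadd L (vadd L (lbr L y y) (lbr L x y)) (vadd L (lbr L y x) (lbr L x x))"
    using assms lbr_add_left lbr_add_right by simp
  also have "\<dots> = vadd L (lbr L y x) (lbr L x y)"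
    using assms lbr_self add_commute by simp
  finally show ?thesis using neg_unique assms by simp
qed

end

locale proj_lie_alg =
  fixes N :: "('k::field, 'a) theta"
  assumes theta_alg: "theta_alg N"

sublocale proj_lie_alg \<subseteq> lie_alg N
  using theta_alg unfolding theta_alg_def by unfold_locales blast

context proj_lie_alg
begin

lemma tproj_closed [simp]: "x \<in> vcarrier N \<Longrightarrow> tproj N x \<in> vcarrier N"
  and tproj_add: "x \<in> vcarrier N \<Longrightarrow> y \<in> vcarrier N \<Longrightarrow>
         tproj N (vadd N x y) = vadd N (tproj N x) (tproj N y)"
  and tproj_smul: "x \<in> vcarrier N \<Longrightarrow> tproj N (vsmul N a x) = vsmul N a (tproj N x)"
  and tproj_idem [simp]: "x \<in> vcarrier N \<Longrightarrow> tproj N (tproj N x) = tproj N x"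
  and tproj_lbr: "x \<in> vcarrier N \<Longrightarrow> y \<in> vcarrier N \<Longrightarrow>
         tproj N (lbr N x y) = vadd N (lbr N (tproj N x) y) (lbr N x (tproj N y))"
  using theta_alg unfolding theta_alg_def by meson+

lemma tproj_zero [simp]: "tproj N (vzero N) = vzero N"
  using tproj_smul[of "vzero N" 0] by simp

lemma tproj_sub: "x \<in> vcarrier N \<Longrightarrow> y \<in> vcarrier N \<Longrightarrow>
    tproj N (vsub N x y) = vsub N (tproj N x) (tproj N y)"
  unfolding vsub_def by (simp add: tproj_add tproj_smul)

lemma mem_pker_iff: "x \<in> pker N \<longleftrightarrow> x \<in> vcarrier N \<and> tproj N x = vzero N"
  unfolding pker_def by simp

lemma mem_pim_iff: "x \<in> pim N \<longleftrightarrow> x \<in> vcarrier N \<and> tproj N x = x"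
  unfolding pim_def by (auto intro: image_eqI[where x = x])

lemma zero_mem_pker [simp]: "vzero N \<in> pker N"
  and zero_mem_pim [simp]: "vzero N \<in> pim N"
  by (simp_all add: mem_pker_iff mem_pim_iff)

lemma pker_closed: "x \<in> pker N \<Longrightarrow> x \<in> vcarrier N"
  and pim_closed: "x \<in> pim N \<Longrightarrow> x \<in> vcarrier N"
  by (simp_all add: mem_pker_iff mem_pim_iff)

lemma sub_tproj_mem_pker: "x \<in> vcarrier N \<Longrightarrow> vsub N x (tproj N x) \<in> pker N"
  and tproj_mem_pim: "x \<in> vcarrier N \<Longrightarrow> tproj N x \<in> pim N"
  by (simp_all add: mem_pker_iff mem_pim_iff tproj_sub)

lemma tproj_add_pker_pim: "k \<in> pker N \<Longrightarrow> i \<in> pim N \<Longrightarrow> tproj N (vadd N k i) = i"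
  by (simp add: mem_pker_iff mem_pim_iff tproj_add)

lemma pker_add: "x \<in> pker N \<Longrightarrow> y \<in> pker N \<Longrightarrow> vadd N x y \<in> pker N"
  and pker_smul: "x \<in> pker N \<Longrightarrow> vsmul N a x \<in> pker N"
  and pker_lbr: "x \<in> pker N \<Longrightarrow> y \<in> pker N \<Longrightarrow> lbr N x y \<in> pker N"
  and pim_add: "x \<in> pim N \<Longrightarrow> y \<in> pim N \<Longrightarrow> vadd N x y \<in> pim N"
  and pim_smul: "x \<in> pim N \<Longrightarrow> vsmul N a x \<in> pim N"
  and lbr_pker_pim: "x \<in> pker N \<Longrightarrow> y \<in> pim N \<Longrightarrow> lbr N x y \<in> pim N"
  by (simp_all add: mem_pker_iff mem_pim_iff tproj_add tproj_smul tproj_lbr)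

lemma lbr_pim_pker: "x \<in> pim N \<Longrightarrow> y \<in> pker N \<Longrightarrow> lbr N x y \<in> pim N"
  using lbr_antisym lbr_pker_pim pim_smul pim_closed pker_closed by metis

lemma pker_pim_decompE:
  assumes "x \<in> vcarrier N"
  obtains k i where "k \<in> pker N" "i \<in> pim N" "x = vadd N k i"
  using assms sub_tproj_mem_pker tproj_mem_pim sub_add_cancel by (metis tproj_closed)

text \<open>For \<open>b, d \<in> im p\<close> the derivation rule gives \<open>p[b,d] = 2[b,d]\<close>, and then
  \<open>p\<^sup>2 = p\<close> forces \<open>2[b,d] = 0\<close>.\<close>
lemma lbr_pim_pim:
  assumes "(2::'k) \<noteq> 0" "b \<in> pim N" "d \<in> pim N"
  shows "lbr N b d = vzero N"
proof -
  have b: "b \<in> vcarrier N" "tproj N b = b" and d: "d \<in> vcarrier N" "tproj N d = d"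
    using assms(2,3) by (simp_all add: mem_pim_iff)
  define z where "z = lbr N b d"
  have z: "z \<in> vcarrier N" unfolding z_def using b d by simp
  have tproj_z: "tproj N z = vsmul N 2 z"
    using tproj_lbr[of b d] b d add_smul[OF z, of 1 1] unfolding z_def by simp
  have "vsmul N 2 (vsmul N 2 z) = vsmul N 2 z"
    using tproj_idem[OF z] tproj_smul[OF z] tproj_z by simp
  hence "vsmul N 2 z = vzero N"
    using add_smul[of "vsmul N 2 z" 1 1] z by (intro add_self_eq_zero) simp_all
  hence "vsmul N (1 / 2) (vsmul N 2 z) = vzero N" by simp
  thus ?thesis using assms(1) z unfolding z_def by (simp flip: smul_mult)
qed

lemma lbr_pker_pim_decomp:
  assumes "(2::'k) \<noteq> 0" "a \<in> pker N" "b \<in> pim N" "c \<in> pker N" "d \<in> pim N"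
  shows "lbr N (vadd N a b) (vadd N c d) = vadd N (lbr N a c) (vadd N (lbr N b c) (lbr N a d))"
proof -
  have abcd: "a \<in> vcarrier N" "b \<in> vcarrier N" "c \<in> vcarrier N" "d \<in> vcarrier N"
    using assms(2-5) pker_closed pim_closed by blast+
  have "lbr N (vadd N a b) (vadd N c d) =
      vadd N (vadd N (lbr N a c) (lbr N b c)) (vadd N (lbr N a d) (lbr N b d))"
    using abcd lbr_add_left lbr_add_right by simp
  also have "\<dots> = vadd N (lbr N a c) (vadd N (lbr N b c) (lbr N a d))"
    using abcd lbr_pim_pim[OF assms(1,3,5)] add_assoc by simp
  finally show ?thesis .
qed

end

lemma lin_map_closed: "lin_map V W f \<Longrightarrow> x \<in> vcarrier V \<Longrightarrow> f x \<in> vcarrier W"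
  and lin_map_add: "lin_map V W f \<Longrightarrow> x \<in> vcarrier V \<Longrightarrow> y \<in> vcarrier V \<Longrightarrow>
         f (vadd V x y) = vadd W (f x) (f y)"
  and lin_map_smul: "lin_map V W f \<Longrightarrow> x \<in> vcarrier V \<Longrightarrow> f (vsmul V a x) = vsmul W a (f x)"
  unfolding lin_map_def by blast+

lemma lin_map_zero:
  assumes "vspace V" "vspace W" "lin_map V W f"
  shows "f (vzero V) = vzero W"
proof -
  interpret V: vspace V by fact
  interpret W: vspace W by fact
  have "f (vzero V) = f (vsmul V 0 (vzero V))" by simp
  also have "\<dots> = vsmul W 0 (f (vzero V))" by (rule lin_map_smul[OF assms(3)]) simp
  also have "\<dots> = vzero W" using lin_map_closed[OF assms(3) V.zero_closed] by simp
  finally show ?thesis .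
qed

lemma lin_map_sub:
  "vspace V \<Longrightarrow> lin_map V W f \<Longrightarrow> x \<in> vcarrier V \<Longrightarrow> y \<in> vcarrier V \<Longrightarrow>
    f (vsub V x y) = vsub W (f x) (f y)"
  unfolding vsub_def by (simp add: lin_map_add lin_map_smul vspace.smul_closed)

lemma theta_homD:
  assumes "theta_hom A B h"
  shows "x \<in> vcarrier A \<Longrightarrow> h x \<in> vcarrier B"
    and "x \<in> vcarrier A \<Longrightarrow> y \<in> vcarrier A \<Longrightarrow> h (vadd A x y) = vadd B (h x) (h y)"
    and "x \<in> vcarrier A \<Longrightarrow> h (vsmul A a x) = vsmul B a (h x)"
    and "x \<in> vcarrier A \<Longrightarrow> y \<in> vcarrier A \<Longrightarrow> h (lbr A x y) = lbr B (h x) (h y)"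
    and "x \<in> vcarrier A \<Longrightarrow> h (tproj A x) = tproj B (h x)"
  using assms unfolding theta_hom_def lie_hom_def lin_map_def by blast+

lemma theta_hom_zero:
  "vspace A \<Longrightarrow> vspace B \<Longrightarrow> theta_hom A B h \<Longrightarrow> h (vzero A) = vzero B"
  unfolding theta_hom_def lie_hom_def using lin_map_zero by blast

section \<open>The functor \<open>\<F>\<close>\<close>

text \<open>Everything about \<open>\<F>\<close> holds under these weak axioms; they let \<open>W(X,Y)\<close> be handled without
  developing the associative algebra \<open>A(X)\<close>.\<close>
definition pre_rep :: "('k::field, 'l, 'v) rep \<Rightarrow> bool" where
  "pre_rep R \<longleftrightarrow> vs_ax (rlie R) \<and> vs_ax (rmod R) \<and>
     (\<forall>x\<in>vcarrier (rlie R). \<forall>y\<in>vcarrier (rlie R). lbr (rlie R) x y \<in> vcarrier (rlie R)) \<and>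
     (\<forall>l\<in>vcarrier (rlie R). \<forall>v\<in>vcarrier (rmod R). ract R l v \<in> vcarrier (rmod R)) \<and>
     (\<forall>l\<in>vcarrier (rlie R). ract R l (vzero (rmod R)) = vzero (rmod R))"

lemma pre_repD:
  assumes "pre_rep R"
  shows "vspace (rlie R)" "vspace (rmod R)"
    and "x \<in> vcarrier (rlie R) \<Longrightarrow> y \<in> vcarrier (rlie R) \<Longrightarrow> lbr (rlie R) x y \<in> vcarrier (rlie R)"
    and "l \<in> vcarrier (rlie R) \<Longrightarrow> v \<in> vcarrier (rmod R) \<Longrightarrow> ract R l v \<in> vcarrier (rmod R)"
    and "l \<in> vcarrier (rlie R) \<Longrightarrow> ract R l (vzero (rmod R)) = vzero (rmod R)"
  using assms unfolding pre_rep_def vspace_def by blast+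

lemma pre_rep_if_rep_alg: "rep_alg R \<Longrightarrow> pre_rep R"
proof -
  assume R: "rep_alg R"
  interpret V: vspace "rmod R"
    using R unfolding rep_alg_def vspace_def by blast
  have act_add: "ract R l (vadd (rmod R) v w) = vadd (rmod R) (ract R l v) (ract R l w)"
    if "l \<in> vcarrier (rlie R)" "v \<in> vcarrier (rmod R)" "w \<in> vcarrier (rmod R)" for l v w
    using R that unfolding rep_alg_def by blast
  have act_closed: "ract R l v \<in> vcarrier (rmod R)"
    if "l \<in> vcarrier (rlie R)" "v \<in> vcarrier (rmod R)" for l v
    using R that unfolding rep_alg_def by blast
  have act_zero: "ract R l (vzero (rmod R)) = vzero (rmod R)" if "l \<in> vcarrier (rlie R)" for l
    by (rule V.add_self_eq_zero) (use that act_add act_closed in \<open>simp_all flip: act_add\<close>)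
  have "lie_ax (rlie R)" using R unfolding rep_alg_def by blast
  then show "pre_rep R"
    unfolding pre_rep_def lie_ax_def using V.vs_ax act_closed act_zero by blast
qed

lemma Frep_simps [simp]:
  "vcarrier (Frep R) = vcarrier (rlie R) \<times> vcarrier (rmod R)"
  "vadd (Frep R) (l1, v1) (l2, v2) = (vadd (rlie R) l1 l2, vadd (rmod R) v1 v2)"
  "vzero (Frep R) = (vzero (rlie R), vzero (rmod R))"
  "vsmul (Frep R) a (l, v) = (vsmul (rlie R) a l, vsmul (rmod R) a v)"
  "lbr (Frep R) (l1, v1) (l2, v2) = (lbr (rlie R) l1 l2, vsub (rmod R) (ract R l1 v2) (ract R l2 v1))"
  "tproj (Frep R) (l, v) = (vzero (rlie R), v)"
  by (simp_all add: Frep_def)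

lemma vspace_Frep:
  assumes "vspace (rlie R)" "vspace (rmod R)"
  shows "vspace (Frep R)"
proof -
  interpret L: vspace "rlie R" by fact
  interpret V: vspace "rmod R" by fact
  have neg: "\<exists>y\<in>vcarrier (Frep R). vadd (Frep R) x y = vzero (Frep R)"
    if "x \<in> vcarrier (Frep R)" for x
    using that L.add_neg_right V.add_neg_right
    by (intro bexI[of _ "vsmul (Frep R) (- 1) x"]) auto
  show ?thesis
  proof (unfold vspace_def vs_ax_def, intro conjI)
    show "\<forall>x\<in>vcarrier (Frep R). \<forall>y\<in>vcarrier (Frep R). vadd (Frep R) x y = vadd (Frep R) y x"
      using L.add_commute V.add_commute by auto
    show "\<forall>x\<in>vcarrier (Frep R). \<exists>y\<in>vcarrier (Frep R). vadd (Frep R) x y = vzero (Frep R)"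
      using neg by blast
  qed (clarsimp simp: L.add_assoc V.add_assoc L.smul_add V.smul_add L.add_smul V.add_smul
      L.smul_mult V.smul_mult)+
qed

lemma theta_cong_Frep_times:
  assumes "rep_cong R (T1, T2)"
  shows "theta_cong (Frep R) (T1 \<times> T2)"
proof -
  have T1: "lie_ideal (rlie R) T1" and T2: "subspace (rmod R) T2"
    and act: "\<And>l t. l \<in> vcarrier (rlie R) \<Longrightarrow> t \<in> T2 \<Longrightarrow> ract R l t \<in> T2"
             "\<And>t v. t \<in> T1 \<Longrightarrow> v \<in> vcarrier (rmod R) \<Longrightarrow> ract R t v \<in> T2"
    using assms unfolding rep_cong_def by auto
  have sub: "vsub (rmod R) a b \<in> T2" if "a \<in> T2" "b \<in> T2" for a b
    using T2 that unfolding subspace_def vsub_def by blast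
  show ?thesis
    using T1 T2 act sub unfolding theta_cong_def lie_ideal_def subspace_def
    by (auto simp: subset_iff)
qed

context
  fixes R :: "('k::field, 'l, 'v) rep" and H :: "('k, 'l2, 'v2) rep"
  assumes R: "pre_rep R" and H: "pre_rep H"
begin

interpretation RL: vspace "rlie R" using pre_repD(1)[OF R] .
interpretation RV: vspace "rmod R" using pre_repD(2)[OF R] .
interpretation HL: vspace "rlie H" using pre_repD(1)[OF H] .
interpretation HV: vspace "rmod H" using pre_repD(2)[OF H] .
interpretation RF: vspace "Frep R" using vspace_Frep RL.vspace_axioms RV.vspace_axioms .
interpretation HF: vspace "Frep H" using vspace_Frep HL.vspace_axioms HV.vspace_axioms .

lemma theta_hom_Frep_map_prod:
  assumes "rep_hom R H \<phi> \<psi>"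
  shows "theta_hom (Frep R) (Frep H) (map_prod \<phi> \<psi>)"
proof -
  have \<phi>: "lin_map (rlie R) (rlie H) \<phi>" and \<psi>: "lin_map (rmod R) (rmod H) \<psi>"
    and lbr: "\<And>x y. x \<in> vcarrier (rlie R) \<Longrightarrow> y \<in> vcarrier (rlie R) \<Longrightarrow>
               \<phi> (lbr (rlie R) x y) = lbr (rlie H) (\<phi> x) (\<phi> y)"
    and act: "\<And>l v. l \<in> vcarrier (rlie R) \<Longrightarrow> v \<in> vcarrier (rmod R) \<Longrightarrow>
               ract H (\<phi> l) (\<psi> v) = \<psi> (ract R l v)"
    using assms unfolding rep_hom_def lie_hom_def by blast+
  have \<phi>0: "\<phi> (vzero (rlie R)) = vzero (rlie H)"
    using lin_map_zero[OF RL.vspace_axioms HL.vspace_axioms \<phi>] .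
  show ?thesis
    unfolding theta_hom_def lie_hom_def lin_map_def
    using lin_map_closed[OF \<phi>] lin_map_closed[OF \<psi>] lin_map_add[OF \<phi>] lin_map_add[OF \<psi>]
      lin_map_smul[OF \<phi>] lin_map_smul[OF \<psi>] lin_map_sub[OF RV.vspace_axioms \<psi>]
      lbr act pre_repD(4)[OF R] \<phi>0
    by auto
qed

text \<open>Commuting with the projections forces \<open>h\<close> to map \<open>L \<times> 0\<close> and \<open>0 \<times> V\<close> into
  \<open>L \<times> 0\<close> and \<open>0 \<times> V\<close>.\<close>
lemma theta_hom_Frep_eq_map_prod:
  assumes h: "theta_hom (Frep R) (Frep H) h" and x: "x \<in> vcarrier (Frep R)"
  shows "h x = map_prod (\<lambda>l. fst (h (l, vzero (rmod R)))) (\<lambda>v. snd (h (vzero (rlie R), v))) x"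
proof -
  obtain l v where lv: "x = (l, v)" "l \<in> vcarrier (rlie R)" "v \<in> vcarrier (rmod R)"
    using x by auto
  note hD = theta_homD[OF h]
  have h0: "h (vzero (rlie R), vzero (rmod R)) = (vzero (rlie H), vzero (rmod H))"
    using theta_hom_zero[OF RF.vspace_axioms HF.vspace_axioms h] by simp
  have "tproj (Frep H) (h (l, vzero (rmod R))) = (vzero (rlie H), vzero (rmod H))"
    using hD(5)[of "(l, vzero (rmod R))"] lv h0 by simp
  hence snd_l: "snd (h (l, vzero (rmod R))) = vzero (rmod H)"
    by (cases "h (l, vzero (rmod R))") simp
  have "tproj (Frep H) (h (vzero (rlie R), v)) = h (vzero (rlie R), v)"
    using hD(5)[of "(vzero (rlie R), v)"] lv by simp
  hence fst_v: "fst (h (vzero (rlie R), v)) = vzero (rlie H)"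
    by (cases "h (vzero (rlie R), v)") simp
  have "h (l, v) = vadd (Frep H) (h (l, vzero (rmod R))) (h (vzero (rlie R), v))"
    using hD(2)[of "(l, vzero (rmod R))" "(vzero (rlie R), v)"] lv by simp
  moreover have "h (l, vzero (rmod R)) \<in> vcarrier (Frep H)" "h (vzero (rlie R), v) \<in> vcarrier (Frep H)"
    using hD(1) lv by auto
  ultimately show ?thesis
    using lv snd_l fst_v by (cases "h (l, vzero (rmod R))", cases "h (vzero (rlie R), v)") auto
qed

lemma rep_hom_of_theta_hom_Frep:
  assumes h: "theta_hom (Frep R) (Frep H) h"
  shows "rep_hom R H (\<lambda>l. fst (h (l, vzero (rmod R)))) (\<lambda>v. snd (h (vzero (rlie R), v)))"
proof -
  define \<phi> where "\<phi> l = fst (h (l, vzero (rmod R)))" for l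
  define \<psi> where "\<psi> v = snd (h (vzero (rlie R), v))" for v
  note hD = theta_homD[OF h]
  have h: "h (l, v) = (\<phi> l, \<psi> v)" if "l \<in> vcarrier (rlie R)" "v \<in> vcarrier (rmod R)" for l v
    using theta_hom_Frep_eq_map_prod[OF h, of "(l, v)"] that unfolding \<phi>_def \<psi>_def by simp
  have \<phi>_closed: "\<phi> l \<in> vcarrier (rlie H)" if "l \<in> vcarrier (rlie R)" for l
    using hD(1)[of "(l, vzero (rmod R))"] h[of l "vzero (rmod R)"] that by auto
  have \<psi>_closed: "\<psi> v \<in> vcarrier (rmod H)" if "v \<in> vcarrier (rmod R)" for v
    using hD(1)[of "(vzero (rlie R), v)"] h[of "vzero (rlie R)" v] that by auto
  have zero: "\<phi> (vzero (rlie R)) = vzero (rlie H)" "\<psi> (vzero (rmod R)) = vzero (rmod H)"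
    using theta_hom_zero[OF RF.vspace_axioms HF.vspace_axioms assms]
    unfolding \<phi>_def \<psi>_def by simp_all
  have \<phi>_add: "\<phi> (vadd (rlie R) x y) = vadd (rlie H) (\<phi> x) (\<phi> y)"
    if "x \<in> vcarrier (rlie R)" "y \<in> vcarrier (rlie R)" for x y
    using hD(2)[of "(x, vzero (rmod R))" "(y, vzero (rmod R))"] h that by simp
  have \<psi>_add: "\<psi> (vadd (rmod R) v w) = vadd (rmod H) (\<psi> v) (\<psi> w)"
    if "v \<in> vcarrier (rmod R)" "w \<in> vcarrier (rmod R)" for v w
    using hD(2)[of "(vzero (rlie R), v)" "(vzero (rlie R), w)"] h that by simp
  have \<phi>_smul: "\<phi> (vsmul (rlie R) a x) = vsmul (rlie H) a (\<phi> x)" if "x \<in> vcarrier (rlie R)" for a x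
    using hD(3)[of "(x, vzero (rmod R))" a] h that by simp
  have \<psi>_smul: "\<psi> (vsmul (rmod R) a v) = vsmul (rmod H) a (\<psi> v)" if "v \<in> vcarrier (rmod R)" for a v
    using hD(3)[of "(vzero (rlie R), v)" a] h that by simp
  have \<phi>_lbr: "\<phi> (lbr (rlie R) x y) = lbr (rlie H) (\<phi> x) (\<phi> y)"
    if "x \<in> vcarrier (rlie R)" "y \<in> vcarrier (rlie R)" for x y
    using hD(4)[of "(x, vzero (rmod R))" "(y, vzero (rmod R))"] h that pre_repD(3,4,5)[OF R] by simp
  have act: "ract H (\<phi> l) (\<psi> v) = \<psi> (ract R l v)"
    if "l \<in> vcarrier (rlie R)" "v \<in> vcarrier (rmod R)" for l v
  proof -
    have "ract H (\<phi> l) (\<psi> v) \<in> vcarrier (rmod H)"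
      using \<phi>_closed \<psi>_closed that pre_repD(4)[OF H] by blast
    then show ?thesis
      using hD(4)[of "(l, vzero (rmod R))" "(vzero (rlie R), v)"] h that zero \<phi>_closed
        pre_repD(3,4,5)[OF R] pre_repD(5)[OF H]
      by simp
  qed
  have "rep_hom R H \<phi> \<psi>"
    unfolding rep_hom_def lie_hom_def lin_map_def
    using \<phi>_closed \<psi>_closed \<phi>_add \<psi>_add \<phi>_smul \<psi>_smul \<phi>_lbr act by auto
  then show ?thesis
    unfolding \<phi>_def[abs_def] \<psi>_def[abs_def] .
qed

lemma subset_vker_map_prod_iff:
  "S \<subseteq> vker (Frep R) (Frep H) (map_prod \<phi> \<psi>) \<longleftrightarrow>
     fst ` S \<subseteq> vker (rlie R) (rlie H) \<phi> \<and> snd ` S \<subseteq> vker (rmod R) (rmod H) \<psi>"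
proof -
  have "vker (Frep R) (Frep H) (map_prod \<phi> \<psi>) = vker (rlie R) (rlie H) \<phi> \<times> vker (rmod R) (rmod H) \<psi>"
    unfolding vker_def by auto
  then show ?thesis by fastforce
qed

lemma theta_homs_Frep_vanish_iff:
  assumes lv: "l \<in> vcarrier (rlie R)" "v \<in> vcarrier (rmod R)"
  shows "(\<forall>h. theta_hom (Frep R) (Frep H) h \<and> S \<subseteq> vker (Frep R) (Frep H) h \<longrightarrow>
           h (l, v) = vzero (Frep H)) \<longleftrightarrow>
         (\<forall>\<phi> \<psi>. rep_hom R H \<phi> \<psi> \<and> fst ` S \<subseteq> vker (rlie R) (rlie H) \<phi> \<and>
           snd ` S \<subseteq> vker (rmod R) (rmod H) \<psi> \<longrightarrow> \<phi> l = vzero (rlie H) \<and> \<psi> v = vzero (rmod H))"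
proof safe
  fix \<phi> \<psi>
  assume all: "\<forall>h. theta_hom (Frep R) (Frep H) h \<and> S \<subseteq> vker (Frep R) (Frep H) h \<longrightarrow>
      h (l, v) = vzero (Frep H)"
    and hom: "rep_hom R H \<phi> \<psi>"
    and "fst ` S \<subseteq> vker (rlie R) (rlie H) \<phi>" "snd ` S \<subseteq> vker (rmod R) (rmod H) \<psi>"
  then have "S \<subseteq> vker (Frep R) (Frep H) (map_prod \<phi> \<psi>)"
    using subset_vker_map_prod_iff by simp
  then have "map_prod \<phi> \<psi> (l, v) = vzero (Frep H)"
    using all theta_hom_Frep_map_prod[OF hom] by blast
  then show "\<phi> l = vzero (rlie H)" "\<psi> v = vzero (rmod H)" by simp_all
next
  fix h
  assume all: "\<forall>\<phi> \<psi>. rep_hom R H \<phi> \<psi> \<and> fst ` S \<subseteq> vker (rlie R) (rlie H) \<phi> \<and>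
       snd ` S \<subseteq> vker (rmod R) (rmod H) \<psi> \<longrightarrow> \<phi> l = vzero (rlie H) \<and> \<psi> v = vzero (rmod H)"
    and h: "theta_hom (Frep R) (Frep H) h" and S: "S \<subseteq> vker (Frep R) (Frep H) h"
  let ?\<phi> = "\<lambda>l. fst (h (l, vzero (rmod R)))" and ?\<psi> = "\<lambda>v. snd (h (vzero (rlie R), v))"
  have eq: "h y = map_prod ?\<phi> ?\<psi> y" if "y \<in> vcarrier (Frep R)" for y
    using theta_hom_Frep_eq_map_prod[OF h that] .
  have "S \<subseteq> vker (Frep R) (Frep H) (map_prod ?\<phi> ?\<psi>)"
  proof
    fix y assume "y \<in> S"
    then have y: "y \<in> vcarrier (Frep R)" "h y = vzero (Frep H)"
      using S unfolding vker_def by auto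
    have "map_prod ?\<phi> ?\<psi> y = h y" by (rule eq[OF y(1), symmetric])
    with y show "y \<in> vker (Frep R) (Frep H) (map_prod ?\<phi> ?\<psi>)"
      unfolding vker_def by simp
  qed
  then have "?\<phi> l = vzero (rlie H) \<and> ?\<psi> v = vzero (rmod H)"
    using all rep_hom_of_theta_hom_Frep[OF h] subset_vker_map_prod_iff by blast
  then show "h (l, v) = vzero (Frep H)"
    by (subst eq) (use lv in auto)
qed

lemma theta_closure_Frep:
  "theta_closure (Frep R) (Frep H) S =
     fst (rep_closure R H (fst ` S, snd ` S)) \<times> snd (rep_closure R H (fst ` S, snd ` S))"
proof (rule set_eqI)
  fix x :: "'l \<times> 'v"
  obtain l v where x: "x = (l, v)" by fastforce
  have "x \<in> theta_closure (Frep R) (Frep H) S \<longleftrightarrow>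
      l \<in> vcarrier (rlie R) \<and> v \<in> vcarrier (rmod R) \<and>
      (\<forall>h. theta_hom (Frep R) (Frep H) h \<and> S \<subseteq> vker (Frep R) (Frep H) h \<longrightarrow>
         h (l, v) = vzero (Frep H))"
    unfolding theta_closure_def x by simp
  also have "\<dots> \<longleftrightarrow> l \<in> vcarrier (rlie R) \<and> v \<in> vcarrier (rmod R) \<and>
      (\<forall>\<phi> \<psi>. rep_hom R H \<phi> \<psi> \<and> fst ` S \<subseteq> vker (rlie R) (rlie H) \<phi> \<and>
         snd ` S \<subseteq> vker (rmod R) (rmod H) \<psi> \<longrightarrow> \<phi> l = vzero (rlie H) \<and> \<psi> v = vzero (rmod H))"
    by (intro conj_cong refl) (rule theta_homs_Frep_vanish_iff)
  also have "\<dots> \<longleftrightarrow>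
      x \<in> fst (rep_closure R H (fst ` S, snd ` S)) \<times> snd (rep_closure R H (fst ` S, snd ` S))"
    unfolding rep_closure_def x by auto
  finally show "x \<in> theta_closure (Frep R) (Frep H) S \<longleftrightarrow> \<dots>" .
qed

lemma zero_mem_rep_closure:
  "vzero (rlie R) \<in> fst (rep_closure R H T)" "vzero (rmod R) \<in> snd (rep_closure R H T)"
  unfolding rep_closure_def rep_hom_def lie_hom_def
  using lin_map_zero[OF RL.vspace_axioms HL.vspace_axioms]
    lin_map_zero[OF RV.vspace_axioms HV.vspace_axioms]
  by auto

lemma zero_mem_Cl_rep:
  assumes "T \<in> Cl_rep R H"
  shows "vzero (rlie R) \<in> fst T" "vzero (rmod R) \<in> snd T"
  using zero_mem_rep_closure[of T] assms unfolding Cl_rep_def by simp_all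

lemma times_mem_Cl_theta_Frep:
  assumes "T \<in> Cl_rep R H"
  shows "fst T \<times> snd T \<in> Cl_theta (Frep R) (Frep H)"
proof -
  have "(fst ` (fst T \<times> snd T), snd ` (fst T \<times> snd T)) = T"
    using zero_mem_Cl_rep[OF assms] by (auto simp: prod_eq_iff)
  then show ?thesis
    using assms unfolding Cl_theta_def Cl_rep_def by (simp only: theta_closure_Frep mem_Collect_eq)
qed

lemma fst_snd_image_mem_Cl_rep:
  assumes "S \<in> Cl_theta (Frep R) (Frep H)"
  shows "(fst ` S, snd ` S) \<in> Cl_rep R H"
    and "fst ` S \<times> snd ` S = S"
proof -
  let ?T = "rep_closure R H (fst ` S, snd ` S)"
  have S: "S = fst ?T \<times> snd ?T"
    using assms theta_closure_Frep unfolding Cl_theta_def by simp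
  have "fst ?T \<noteq> {}" "snd ?T \<noteq> {}"
    using zero_mem_rep_closure[of "(fst ` S, snd ` S)"] by auto
  then have "fst ` S = fst ?T" "snd ` S = snd ?T"
    by (subst S, simp)+
  then show "(fst ` S, snd ` S) \<in> Cl_rep R H" "fst ` S \<times> snd ` S = S"
    unfolding Cl_rep_def using S by (simp_all add: prod_eq_iff)
qed

lemma bij_betw_Cl_rep_Cl_theta_Frep:
  "bij_betw (\<lambda>(T1, T2). T1 \<times> T2) (Cl_rep R H) (Cl_theta (Frep R) (Frep H))"
  by (rule bij_betw_byWitness[where f' = "\<lambda>S. (fst ` S, snd ` S)"])
    (auto simp: fst_snd_image_mem_Cl_rep dest: zero_mem_Cl_rep times_mem_Cl_theta_Frep)

end

section \<open>The functor \<open>\<F>\<^sup>-\<^sup>1\<close>\<close>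

lemma theta_closure_subset: "theta_closure A B T \<subseteq> vcarrier A"
  unfolding theta_closure_def by blast

lemma subset_theta_closure: "T \<subseteq> vcarrier A \<Longrightarrow> T \<subseteq> theta_closure A B T"
  unfolding theta_closure_def vker_def by blast

lemma theta_closure_mono: "S \<subseteq> T \<Longrightarrow> theta_closure A B S \<subseteq> theta_closure A B T"
  unfolding theta_closure_def by blast

lemma theta_closure_idem: "theta_closure A B (theta_closure A B T) = theta_closure A B T"
proof
  show "theta_closure A B T \<subseteq> theta_closure A B (theta_closure A B T)"
    by (rule subset_theta_closure[OF theta_closure_subset])
  have "theta_closure A B T \<subseteq> vker A B h" if "theta_hom A B h" "T \<subseteq> vker A B h" for h
    using that unfolding theta_closure_def vker_def by blast
  then show "theta_closure A B (theta_closure A B T) \<subseteq> theta_closure A B T"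
    unfolding theta_closure_def[of A B "theta_closure A B T"]
    by (auto simp: theta_closure_def[of A B T])
qed

lemma mem_theta_closureI:
  "x \<in> vcarrier A \<Longrightarrow> (\<And>h. theta_hom A B h \<Longrightarrow> T \<subseteq> vker A B h \<Longrightarrow> h x = vzero B) \<Longrightarrow>
    x \<in> theta_closure A B T"
  and mem_theta_closureD:
  "x \<in> theta_closure A B T \<Longrightarrow> theta_hom A B h \<Longrightarrow> T \<subseteq> vker A B h \<Longrightarrow> h x = vzero B"
  and theta_closure_closed: "x \<in> theta_closure A B T \<Longrightarrow> x \<in> vcarrier A"
  unfolding theta_closure_def by blast+

lemma Finv_simps [simp]:
  "vcarrier (rlie (Finv A)) = pker A" "vcarrier (rmod (Finv A)) = pim A"
  "vadd (rlie (Finv A)) = vadd A" "vadd (rmod (Finv A)) = vadd A"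
  "vzero (rlie (Finv A)) = vzero A" "vzero (rmod (Finv A)) = vzero A"
  "vsmul (rlie (Finv A)) = vsmul A" "vsmul (rmod (Finv A)) = vsmul A"
  "lbr (rlie (Finv A)) = lbr A" "ract (Finv A) = lbr A"
  by (simp_all add: Finv_def)

lemma vker_Finv [simp]:
  "vker (rlie (Finv A)) (rlie (Finv B)) \<phi> = {x \<in> pker A. \<phi> x = vzero B}"
  "vker (rmod (Finv A)) (rmod (Finv B)) \<psi> = {x \<in> pim A. \<psi> x = vzero B}"
  by (simp_all add: vker_def)

lemma rep_closure_subset:
  "fst (rep_closure R H T) \<subseteq> vcarrier (rlie R)" "snd (rep_closure R H T) \<subseteq> vcarrier (rmod R)"
  unfolding rep_closure_def by auto

lemma rep_hom_Finv_iff: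
  "rep_hom (Finv A) (Finv B) \<phi> \<psi> \<longleftrightarrow>
     (\<forall>x\<in>pker A. \<phi> x \<in> pker B) \<and>
     (\<forall>x\<in>pker A. \<forall>y\<in>pker A. \<phi> (vadd A x y) = vadd B (\<phi> x) (\<phi> y)) \<and>
     (\<forall>a. \<forall>x\<in>pker A. \<phi> (vsmul A a x) = vsmul B a (\<phi> x)) \<and>
     (\<forall>x\<in>pker A. \<forall>y\<in>pker A. \<phi> (lbr A x y) = lbr B (\<phi> x) (\<phi> y)) \<and>
     (\<forall>x\<in>pim A. \<psi> x \<in> pim B) \<and>
     (\<forall>x\<in>pim A. \<forall>y\<in>pim A. \<psi> (vadd A x y) = vadd B (\<psi> x) (\<psi> y)) \<and>
     (\<forall>a. \<forall>x\<in>pim A. \<psi> (vsmul A a x) = vsmul B a (\<psi> x)) \<and>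
     (\<forall>l\<in>pker A. \<forall>v\<in>pim A. lbr B (\<phi> l) (\<psi> v) = \<psi> (lbr A l v))"
  unfolding rep_hom_def lie_hom_def lin_map_def by auto

lemma rep_cong_Finv_Int:
  assumes "theta_alg A" "theta_cong A T"
  shows "rep_cong (Finv A) (T \<inter> pker A, T \<inter> pim A)"
proof -
  interpret proj_lie_alg A using assms(1) by (rule proj_lie_alg.intro)
  have "T \<subseteq> vcarrier A" "vzero A \<in> T"
    and "\<And>x y. x \<in> T \<Longrightarrow> y \<in> T \<Longrightarrow> vadd A x y \<in> T"
    and "\<And>a x. x \<in> T \<Longrightarrow> vsmul A a x \<in> T"
    and "\<And>x t. x \<in> vcarrier A \<Longrightarrow> t \<in> T \<Longrightarrow> lbr A x t \<in> T \<and> lbr A t x \<in> T"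
    using assms(2) unfolding theta_cong_def lie_ideal_def subspace_def by blast+
  then show ?thesis
    unfolding rep_cong_def lie_ideal_def subspace_def
    by (auto simp: pker_add pker_smul pker_lbr pim_add pim_smul lbr_pker_pim lbr_pim_pker
        pker_closed pim_closed)
qed

definition glue_hom :: "('k::field, 'a) theta \<Rightarrow> ('k, 'b) theta \<Rightarrow> ('a \<Rightarrow> 'b) \<Rightarrow> ('a \<Rightarrow> 'b) \<Rightarrow> 'a \<Rightarrow> 'b" where
  "glue_hom A B \<phi> \<psi> x = vadd B (\<phi> (vsub A x (tproj A x))) (\<psi> (tproj A x))"

locale proj_lie_alg_pair = a: proj_lie_alg A + b: proj_lie_alg B
  for A :: "('k::field_char_0, 'a) theta" and B :: "('k, 'b) theta"
begin

lemma rep_hom_Finv_of_theta_hom: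
  assumes h: "theta_hom A B h"
  shows "rep_hom (Finv A) (Finv B) h h"
proof -
  note hD = theta_homD[OF h]
  have h0: "h (vzero A) = vzero B"
    using theta_hom_zero[OF a.vspace_axioms b.vspace_axioms h] .
  show ?thesis
    unfolding rep_hom_Finv_iff
    using hD(1-4) hD(5)[symmetric] h0 by (auto simp: a.mem_pker_iff a.mem_pim_iff b.mem_pker_iff b.mem_pim_iff)
qed

context
  fixes \<phi> \<psi> assumes hom: "rep_hom (Finv A) (Finv B) \<phi> \<psi>"
begin

lemma
  shows \<phi>_pker: "x \<in> pker A \<Longrightarrow> \<phi> x \<in> pker B"
    and \<phi>_add: "x \<in> pker A \<Longrightarrow> y \<in> pker A \<Longrightarrow> \<phi> (vadd A x y) = vadd B (\<phi> x) (\<phi> y)"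
    and \<phi>_smul: "x \<in> pker A \<Longrightarrow> \<phi> (vsmul A c x) = vsmul B c (\<phi> x)"
    and \<phi>_lbr: "x \<in> pker A \<Longrightarrow> y \<in> pker A \<Longrightarrow> \<phi> (lbr A x y) = lbr B (\<phi> x) (\<phi> y)"
    and \<psi>_pim: "x \<in> pim A \<Longrightarrow> \<psi> x \<in> pim B"
    and \<psi>_add: "x \<in> pim A \<Longrightarrow> y \<in> pim A \<Longrightarrow> \<psi> (vadd A x y) = vadd B (\<psi> x) (\<psi> y)"
    and \<psi>_smul: "x \<in> pim A \<Longrightarrow> \<psi> (vsmul A c x) = vsmul B c (\<psi> x)"
    and \<psi>_lbr: "l \<in> pker A \<Longrightarrow> v \<in> pim A \<Longrightarrow> \<psi> (lbr A l v) = lbr B (\<phi> l) (\<psi> v)"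
  using hom unfolding rep_hom_Finv_iff by metis+

lemma \<phi>_zero: "\<phi> (vzero A) = vzero B" and \<psi>_zero: "\<psi> (vzero A) = vzero B"
  by (rule b.add_self_eq_zero; simp add: \<phi>_pker \<psi>_pim b.pker_closed b.pim_closed flip: \<phi>_add \<psi>_add)+

lemma glue_hom_add_pker_pim:
  "k \<in> pker A \<Longrightarrow> i \<in> pim A \<Longrightarrow> glue_hom A B \<phi> \<psi> (vadd A k i) = vadd B (\<phi> k) (\<psi> i)"
  unfolding glue_hom_def
  by (simp add: a.tproj_add_pker_pim a.add_sub_cancel a.pker_closed a.pim_closed)

lemma glue_hom_pker: "k \<in> pker A \<Longrightarrow> glue_hom A B \<phi> \<psi> k = \<phi> k"
  using glue_hom_add_pker_pim[of k "vzero A"]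
  by (simp add: \<psi>_zero \<phi>_pker b.pker_closed a.pker_closed)

lemma glue_hom_pim: "i \<in> pim A \<Longrightarrow> glue_hom A B \<phi> \<psi> i = \<psi> i"
  using glue_hom_add_pker_pim[of "vzero A" i]
  by (simp add: \<phi>_zero \<psi>_pim b.pim_closed a.pim_closed)

lemma glue_hom_closed: "x \<in> vcarrier A \<Longrightarrow> glue_hom A B \<phi> \<psi> x \<in> vcarrier B"
  by (elim a.pker_pim_decompE)
    (simp add: glue_hom_add_pker_pim \<phi>_pker \<psi>_pim b.pker_closed b.pim_closed)

lemma glue_hom_add:
  assumes "x \<in> vcarrier A" "y \<in> vcarrier A"
  shows "glue_hom A B \<phi> \<psi> (vadd A x y) = vadd B (glue_hom A B \<phi> \<psi> x) (glue_hom A B \<phi> \<psi> y)"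
proof -
  obtain k i where ki: "k \<in> pker A" "i \<in> pim A" "x = vadd A k i"
    using a.pker_pim_decompE[OF assms(1)] .
  obtain k' i' where ki': "k' \<in> pker A" "i' \<in> pim A" "y = vadd A k' i'"
    using a.pker_pim_decompE[OF assms(2)] .
  have "glue_hom A B \<phi> \<psi> (vadd A x y) = glue_hom A B \<phi> \<psi> (vadd A (vadd A k k') (vadd A i i'))"
    using ki ki' a.add_add_swap[of k i k' i'] a.pker_closed a.pim_closed by simp
  also have "\<dots> = vadd B (vadd B (\<phi> k) (\<phi> k')) (vadd B (\<psi> i) (\<psi> i'))"
    using ki ki' by (simp add: glue_hom_add_pker_pim a.pker_add a.pim_add \<phi>_add \<psi>_add)
  also have "\<dots> = vadd B (glue_hom A B \<phi> \<psi> x) (glue_hom A B \<phi> \<psi> y)"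
    using ki ki' b.add_add_swap[of "\<phi> k" "\<phi> k'" "\<psi> i" "\<psi> i'"]
    by (simp add: glue_hom_add_pker_pim \<phi>_pker \<psi>_pim b.pker_closed b.pim_closed)
  finally show ?thesis .
qed

lemma glue_hom_smul:
  assumes "x \<in> vcarrier A"
  shows "glue_hom A B \<phi> \<psi> (vsmul A c x) = vsmul B c (glue_hom A B \<phi> \<psi> x)"
proof -
  obtain k i where ki: "k \<in> pker A" "i \<in> pim A" "x = vadd A k i"
    using a.pker_pim_decompE[OF assms] .
  then have "vsmul A c x = vadd A (vsmul A c k) (vsmul A c i)"
    using a.smul_add a.pker_closed a.pim_closed by simp
  then show ?thesis
    using ki b.smul_add
    by (simp add: glue_hom_add_pker_pim a.pker_smul a.pim_smul \<phi>_smul \<psi>_smul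
        \<phi>_pker \<psi>_pim b.pker_closed b.pim_closed)
qed

lemma glue_hom_tproj:
  "x \<in> vcarrier A \<Longrightarrow> glue_hom A B \<phi> \<psi> (tproj A x) = tproj B (glue_hom A B \<phi> \<psi> x)"
  by (elim a.pker_pim_decompE)
    (simp add: glue_hom_add_pker_pim glue_hom_pim a.tproj_add_pker_pim
      b.tproj_add_pker_pim \<phi>_pker \<psi>_pim)

text \<open>Both brackets expand along \<open>ker p \<oplus> im p\<close> with the \<open>[im p, im p]\<close> term vanishing, and
  \<open>(\<phi>, \<psi>)\<close> matches the remaining terms.\<close>
lemma glue_hom_lbr:
  assumes "x \<in> vcarrier A" "y \<in> vcarrier A"
  shows "glue_hom A B \<phi> \<psi> (lbr A x y) = lbr B (glue_hom A B \<phi> \<psi> x) (glue_hom A B \<phi> \<psi> y)"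
proof -
  obtain a b where ab: "a \<in> pker A" "b \<in> pim A" "x = vadd A a b"
    using a.pker_pim_decompE[OF assms(1)] .
  obtain c d where cd: "c \<in> pker A" "d \<in> pim A" "y = vadd A c d"
    using a.pker_pim_decompE[OF assms(2)] .
  have ba: "lbr A b c \<in> pim A" "lbr A a d \<in> pim A"
    using ab cd a.lbr_pim_pker a.lbr_pker_pim by blast+
  have "\<psi> (lbr A b c) = lbr B (\<psi> b) (\<phi> c)"
    using ab cd \<psi>_lbr \<psi>_smul a.lbr_antisym b.lbr_antisym a.lbr_pker_pim
      a.pker_closed a.pim_closed b.pker_closed b.pim_closed \<phi>_pker \<psi>_pim
    by metis
  then show ?thesis
    using ab cd ba
    by (simp add: a.lbr_pker_pim_decomp b.lbr_pker_pim_decomp glue_hom_add_pker_pim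
        a.pker_lbr a.pim_add \<phi>_lbr \<psi>_add \<psi>_lbr \<phi>_pker \<psi>_pim)
qed

lemma theta_hom_glue_hom: "theta_hom A B (glue_hom A B \<phi> \<psi>)"
  unfolding theta_hom_def lie_hom_def lin_map_def
  using glue_hom_closed glue_hom_add glue_hom_smul glue_hom_tproj glue_hom_lbr by blast

lemma glue_hom_vanishes_on_theta_closure:
  assumes "K \<subseteq> {x \<in> pker A. \<phi> x = vzero B}" "I \<subseteq> {x \<in> pim A. \<psi> x = vzero B}"
    and "x \<in> theta_closure A B (K \<union> I)"
  shows "glue_hom A B \<phi> \<psi> x = vzero B"
proof (rule mem_theta_closureD[OF assms(3) theta_hom_glue_hom])
  show "K \<union> I \<subseteq> vker A B (glue_hom A B \<phi> \<psi>)"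
    using assms(1,2) glue_hom_pker glue_hom_pim a.pker_closed a.pim_closed
    unfolding vker_def by auto
qed
end

lemma vadd_mem_theta_closure:
  assumes "x \<in> theta_closure A B T" "y \<in> theta_closure A B T"
  shows "vadd A x y \<in> theta_closure A B T"
proof (rule mem_theta_closureI)
  show "vadd A x y \<in> vcarrier A"
    using theta_closure_closed[OF assms(1)] theta_closure_closed[OF assms(2)] by simp
  fix h assume h: "theta_hom A B h" "T \<subseteq> vker A B h"
  then show "h (vadd A x y) = vzero B"
    using theta_closure_closed[OF assms(1)] theta_closure_closed[OF assms(2)]
      mem_theta_closureD[OF assms(1) h] mem_theta_closureD[OF assms(2) h]
    by (simp add: theta_homD)
qed

lemma vsmul_mem_theta_closure:
  assumes "x \<in> theta_closure A B T"
  shows "vsmul A c x \<in> theta_closure A B T"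
proof (rule mem_theta_closureI)
  show "vsmul A c x \<in> vcarrier A" using theta_closure_closed[OF assms] by simp
  fix h assume h: "theta_hom A B h" "T \<subseteq> vker A B h"
  then show "h (vsmul A c x) = vzero B"
    using theta_closure_closed[OF assms] mem_theta_closureD[OF assms h] by (simp add: theta_homD)
qed

lemma tproj_mem_theta_closure:
  assumes "x \<in> theta_closure A B T"
  shows "tproj A x \<in> theta_closure A B T"
proof (rule mem_theta_closureI)
  show "tproj A x \<in> vcarrier A" using theta_closure_closed[OF assms] by simp
  fix h assume h: "theta_hom A B h" "T \<subseteq> vker A B h"
  then show "h (tproj A x) = vzero B"
    using theta_closure_closed[OF assms] mem_theta_closureD[OF assms h] by (simp add: theta_homD)
qed

lemma vsub_mem_theta_closure:
  "x \<in> theta_closure A B T \<Longrightarrow> y \<in> theta_closure A B T \<Longrightarrow> vsub A x y \<in> theta_closure A B T"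
  unfolding vsub_def by (intro vadd_mem_theta_closure vsmul_mem_theta_closure)

lemma theta_closure_Int_pker_pim:
  assumes T: "theta_closure A B T = T"
  shows "theta_closure A B (T \<inter> pker A \<union> T \<inter> pim A) = T"
proof
  show "theta_closure A B (T \<inter> pker A \<union> T \<inter> pim A) \<subseteq> T"
    using theta_closure_mono[of "T \<inter> pker A \<union> T \<inter> pim A" T A B] T by blast
  show "T \<subseteq> theta_closure A B (T \<inter> pker A \<union> T \<inter> pim A)"
  proof
    let ?S = "T \<inter> pker A \<union> T \<inter> pim A"
    fix x assume xT: "x \<in> T"
    have T_closed: "T \<subseteq> vcarrier A" using theta_closure_subset[of A B T] unfolding T .
    then have x: "x \<in> vcarrier A" using xT by blast
    have "tproj A x \<in> T" using tproj_mem_theta_closure[of x T] xT T by simp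
    moreover have "vsub A x (tproj A x) \<in> T"
      using vsub_mem_theta_closure[of x T "tproj A x"] \<open>tproj A x \<in> T\<close> xT T by simp
    ultimately have "vsub A x (tproj A x) \<in> ?S" "tproj A x \<in> ?S"
      using a.sub_tproj_mem_pker[OF x] a.tproj_mem_pim[OF x] by simp_all
    then have "vadd A (vsub A x (tproj A x)) (tproj A x) \<in> theta_closure A B ?S"
      using subset_theta_closure[of ?S A B] T_closed by (intro vadd_mem_theta_closure) blast+
    then show "x \<in> theta_closure A B ?S"
      using a.sub_add_cancel[OF x a.tproj_closed[OF x]] by simp
  qed
qed

lemma rep_closure_Finv_Int:
  assumes T: "theta_closure A B T = T"
  shows "rep_closure (Finv A) (Finv B) (T \<inter> pker A, T \<inter> pim A) = (T \<inter> pker A, T \<inter> pim A)"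
proof -
  have mem_T: "x \<in> T"
    if x: "x \<in> vcarrier A" and killed: "\<And>h. rep_hom (Finv A) (Finv B) h h \<Longrightarrow>
       T \<inter> pker A \<subseteq> {x \<in> pker A. h x = vzero B} \<Longrightarrow> T \<inter> pim A \<subseteq> {x \<in> pim A. h x = vzero B} \<Longrightarrow>
       h x = vzero B" for x
  proof -
    have "x \<in> theta_closure A B T"
    proof (rule mem_theta_closureI[OF x])
      fix h assume "theta_hom A B h" "T \<subseteq> vker A B h"
      then show "h x = vzero B"
        using killed rep_hom_Finv_of_theta_hom unfolding vker_def by blast
    qed
    then show ?thesis using T by simp
  qed
  have "{l \<in> pker A. \<forall>\<phi> \<psi>. rep_hom (Finv A) (Finv B) \<phi> \<psi> \<and>
        T \<inter> pker A \<subseteq> {x \<in> pker A. \<phi> x = vzero B} \<and> T \<inter> pim A \<subseteq> {x \<in> pim A. \<psi> x = vzero B} \<longrightarrow>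
        \<phi> l = vzero B} = T \<inter> pker A" (is "?K = _")
  proof (intro equalityI subsetI)
    fix l assume l: "l \<in> ?K"
    then have "l \<in> T" by (intro mem_T) (auto simp: a.pker_closed)
    with l show "l \<in> T \<inter> pker A" by simp
  qed auto
  moreover have "{v \<in> pim A. \<forall>\<phi> \<psi>. rep_hom (Finv A) (Finv B) \<phi> \<psi> \<and>
        T \<inter> pker A \<subseteq> {x \<in> pker A. \<phi> x = vzero B} \<and> T \<inter> pim A \<subseteq> {x \<in> pim A. \<psi> x = vzero B} \<longrightarrow>
        \<psi> v = vzero B} = T \<inter> pim A" (is "?I = _")
  proof (intro equalityI subsetI)
    fix v assume v: "v \<in> ?I"
    then have "v \<in> T" by (intro mem_T) (auto simp: a.pim_closed)
    with v show "v \<in> T \<inter> pim A" by simp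
  qed auto
  ultimately show ?thesis
    unfolding rep_closure_def by simp
qed

lemma Int_pker_pim_theta_closure_Un:
  assumes P: "P \<in> Cl_rep (Finv A) (Finv B)"
  shows "(theta_closure A B (fst P \<union> snd P) \<inter> pker A, theta_closure A B (fst P \<union> snd P) \<inter> pim A) = P"
proof -
  let ?T = "theta_closure A B (fst P \<union> snd P)"
  let ?K = "fst (rep_closure (Finv A) (Finv B) P)" and ?I = "snd (rep_closure (Finv A) (Finv B) P)"
  have P_eq: "rep_closure (Finv A) (Finv B) P = P" using P unfolding Cl_rep_def by simp
  have P_sub: "fst P \<subseteq> pker A" "snd P \<subseteq> pim A"
    using rep_closure_subset[of "Finv A" "Finv B" P] P_eq by simp_all
  have P_T: "fst P \<union> snd P \<subseteq> ?T"
    using P_sub a.pker_closed a.pim_closed by (intro subset_theta_closure) blast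
  have "?T \<inter> pker A \<subseteq> ?K"
  proof
    fix x assume x: "x \<in> ?T \<inter> pker A"
    have "\<phi> x = vzero B" if "rep_hom (Finv A) (Finv B) \<phi> \<psi>"
      "fst P \<subseteq> {x \<in> pker A. \<phi> x = vzero B}" "snd P \<subseteq> {x \<in> pim A. \<psi> x = vzero B}" for \<phi> \<psi>
      using glue_hom_vanishes_on_theta_closure[OF that IntD1[OF x]]
        glue_hom_pker[OF that(1) IntD2[OF x]] by simp
    then show "x \<in> ?K"
      unfolding rep_closure_def using x by auto
  qed
  moreover have "?T \<inter> pim A \<subseteq> ?I"
  proof
    fix x assume x: "x \<in> ?T \<inter> pim A"
    have "\<psi> x = vzero B" if "rep_hom (Finv A) (Finv B) \<phi> \<psi>"
      "fst P \<subseteq> {x \<in> pker A. \<phi> x = vzero B}" "snd P \<subseteq> {x \<in> pim A. \<psi> x = vzero B}" for \<phi> \<psi>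
      using glue_hom_vanishes_on_theta_closure[OF that IntD1[OF x]]
        glue_hom_pim[OF that(1) IntD2[OF x]] by simp
    then show "x \<in> ?I"
      unfolding rep_closure_def using x by auto
  qed
  ultimately show ?thesis
    using P_sub P_T P_eq by (auto simp: prod_eq_iff)
qed

lemma bij_betw_Cl_theta_Cl_rep_Finv:
  "bij_betw (\<lambda>T. (T \<inter> pker A, T \<inter> pim A)) (Cl_theta A B) (Cl_rep (Finv A) (Finv B))"
  by (rule bij_betw_byWitness[where f' = "\<lambda>P. theta_closure A B (fst P \<union> snd P)"])
    (auto simp: Cl_theta_def Cl_rep_def theta_closure_Int_pker_pim rep_closure_Finv_Int
      theta_closure_idem Int_pker_pim_theta_closure_Un[unfolded Cl_rep_def])

end

section \<open>The free representation \<open>W(X,Y)\<close>\<close>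

lemma vs_ax_pointwise:
  fixes V :: "('k::field, 'b \<Rightarrow> 'k, 'c) vs_scheme"
  assumes ops: "vadd V = (\<lambda>f g x. f x + g x)" "vzero V = (\<lambda>x. 0)" "vsmul V = (\<lambda>a f x. a * f x)"
    and closed: "(\<lambda>x. 0) \<in> vcarrier V"
      "\<And>f g. f \<in> vcarrier V \<Longrightarrow> g \<in> vcarrier V \<Longrightarrow> (\<lambda>x. f x + g x) \<in> vcarrier V"
      "\<And>a f. f \<in> vcarrier V \<Longrightarrow> (\<lambda>x. a * f x) \<in> vcarrier V"
  shows "vs_ax V"
proof -
  have "\<exists>g\<in>vcarrier V. (\<lambda>x. f x + g x) = (\<lambda>x. 0)" if "f \<in> vcarrier V" for f
    using closed(3)[OF that, of "- 1"] by (intro bexI[of _ "\<lambda>x. - 1 * f x"]) auto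
  then show ?thesis
    unfolding vs_ax_def ops using closed by (simp add: algebra_simps)
qed

lemma sum_mult_nonzeroE:
  fixes f g :: "'i \<Rightarrow> 'a::semiring_0"
  assumes "(\<Sum>i\<in>I. f i * g i) \<noteq> 0"
  obtains i where "i \<in> I" "f i \<noteq> 0" "g i \<noteq> 0"
  using assms sum.neutral[of I "\<lambda>i. f i * g i"] by fastforce

lemma support_add:
  fixes f g :: "'i \<Rightarrow> 'a::ab_group_add"
  assumes "finite {x. f x \<noteq> 0} \<and> {x. f x \<noteq> 0} \<subseteq> D" "finite {x. g x \<noteq> 0} \<and> {x. g x \<noteq> 0} \<subseteq> D"
  shows "finite {x. f x + g x \<noteq> 0} \<and> {x. f x + g x \<noteq> 0} \<subseteq> D"
    and "finite {x. f x - g x \<noteq> 0} \<and> {x. f x - g x \<noteq> 0} \<subseteq> D"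
proof -
  have "{x. f x + g x \<noteq> 0} \<subseteq> {x. f x \<noteq> 0} \<union> {x. g x \<noteq> 0}"
    "{x. f x - g x \<noteq> 0} \<subseteq> {x. f x \<noteq> 0} \<union> {x. g x \<noteq> 0}"
    by auto
  then show "finite {x. f x + g x \<noteq> 0} \<and> {x. f x + g x \<noteq> 0} \<subseteq> D"
    "finite {x. f x - g x \<noteq> 0} \<and> {x. f x - g x \<noteq> 0} \<subseteq> D"
    using assms by (meson finite_UnI finite_subset subset_trans Un_least)+
qed

lemma support_smul:
  fixes f :: "'i \<Rightarrow> 'a::mult_zero"
  assumes "finite {x. f x \<noteq> 0} \<and> {x. f x \<noteq> 0} \<subseteq> D"
  shows "finite {x. a * f x \<noteq> 0} \<and> {x. a * f x \<noteq> 0} \<subseteq> D"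
proof -
  have "{x. a * f x \<noteq> 0} \<subseteq> {x. f x \<noteq> 0}" by auto
  then show ?thesis using assms by (meson finite_subset subset_trans)
qed

lemma Apoly_iff: "f \<in> Apoly X \<longleftrightarrow> finite {w. f w \<noteq> 0} \<and> {w. f w \<noteq> 0} \<subseteq> {w. set w \<subseteq> X}"
  unfolding Apoly_def by blast

lemma Amod_iff: "m \<in> Amod X Y \<longleftrightarrow> finite {u. m u \<noteq> 0} \<and> {u. m u \<noteq> 0} \<subseteq> {w. set w \<subseteq> X} \<times> Y"
  unfolding Amod_def by fastforce

lemma Apoly_add: "f \<in> Apoly X \<Longrightarrow> g \<in> Apoly X \<Longrightarrow> (\<lambda>w. f w + g w) \<in> Apoly X"
  and Apoly_diff: "f \<in> Apoly X \<Longrightarrow> g \<in> Apoly X \<Longrightarrow> (\<lambda>w. f w - g w) \<in> Apoly X"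
  and Apoly_smul: "f \<in> Apoly X \<Longrightarrow> (\<lambda>w. a * f w) \<in> Apoly X"
  unfolding Apoly_iff by (fact support_add support_smul)+

lemma Amod_zero: "(\<lambda>u. 0) \<in> Amod X Y"
  by (simp add: Amod_iff)

lemma Amod_add: "m \<in> Amod X Y \<Longrightarrow> n \<in> Amod X Y \<Longrightarrow> (\<lambda>u. m u + n u) \<in> Amod X Y"
  and Amod_smul: "m \<in> Amod X Y \<Longrightarrow> (\<lambda>u. a * m u) \<in> Amod X Y"
  unfolding Amod_iff by (fact support_add support_smul)+

lemma amul_support:
  "{w. amul f g w \<noteq> 0} \<subseteq> (\<lambda>(u, v). u @ v) ` ({u. f u \<noteq> 0} \<times> {v. g v \<noteq> 0})"
proof
  fix w assume "w \<in> {w. amul f g w \<noteq> 0}"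
  then obtain i where "f (take i w) \<noteq> 0" "g (drop i w) \<noteq> 0"
    unfolding amul_def by (auto elim: sum_mult_nonzeroE)
  then show "w \<in> (\<lambda>(u, v). u @ v) ` ({u. f u \<noteq> 0} \<times> {v. g v \<noteq> 0})"
    by (intro image_eqI[of _ _ "(take i w, drop i w)"]) auto
qed

lemma aact_support:
  "{u. aact f m u \<noteq> 0} \<subseteq> (\<lambda>(u, v, y). (u @ v, y)) ` ({u. f u \<noteq> 0} \<times> {u. m u \<noteq> 0})"
proof
  fix u assume "u \<in> {u. aact f m u \<noteq> 0}"
  moreover obtain w y where u: "u = (w, y)" by fastforce
  ultimately obtain i where "f (take i w) \<noteq> 0" "m (drop i w, y) \<noteq> 0"
    unfolding aact_def by (auto elim: sum_mult_nonzeroE)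
  then show "u \<in> (\<lambda>(u, v, y). (u @ v, y)) ` ({u. f u \<noteq> 0} \<times> {u. m u \<noteq> 0})"
    using u by (intro image_eqI[of _ _ "(take i w, drop i w, y)"]) auto
qed

lemma amul_mem_Apoly:
  assumes "f \<in> Apoly X" "g \<in> Apoly X"
  shows "amul f g \<in> Apoly X"
proof -
  have "finite ((\<lambda>(u, v). u @ v) ` ({u. f u \<noteq> 0} \<times> {v. g v \<noteq> 0}))"
    using assms by (simp add: Apoly_iff)
  moreover have "(\<lambda>(u, v). u @ v) ` ({u. f u \<noteq> 0} \<times> {v. g v \<noteq> 0}) \<subseteq> {w. set w \<subseteq> X}"
    using assms unfolding Apoly_iff by (auto simp: subset_iff)
  ultimately show ?thesis
    unfolding Apoly_iff using amul_support[of f g] by (meson finite_subset subset_trans)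
qed

lemma aact_mem_Amod:
  assumes "f \<in> Apoly X" "m \<in> Amod X Y"
  shows "aact f m \<in> Amod X Y"
proof -
  have "finite ((\<lambda>(u, v, y). (u @ v, y)) ` ({u. f u \<noteq> 0} \<times> {u. m u \<noteq> 0}))"
    using assms by (simp add: Apoly_iff Amod_iff)
  moreover have "(\<lambda>(u, v, y). (u @ v, y)) ` ({u. f u \<noteq> 0} \<times> {u. m u \<noteq> 0}) \<subseteq> {w. set w \<subseteq> X} \<times> Y"
    using assms unfolding Apoly_iff Amod_iff by (auto simp: subset_iff)
  ultimately show ?thesis
    unfolding Amod_iff using aact_support[of f m] by (meson finite_subset subset_trans)
qed

lemma freeLie_subset_Apoly: "freeLie X \<subseteq> (Apoly X :: (nat list \<Rightarrow> 'k::field) set)"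
proof
  fix f assume "f \<in> freeLie X"
  then show "f \<in> Apoly X"
  proof (induction rule: freeLie.induct)
    case (gen x)
    then show ?case unfolding Apoly_iff agen_def by simp
  qed (simp_all add: Apoly_iff[of "\<lambda>w. 0"] Apoly_add Apoly_smul Apoly_diff amul_mem_Apoly)
qed

lemma aact_zero_right: "aact f (\<lambda>u. 0) = (\<lambda>u. 0)"
  unfolding aact_def by (auto simp: fun_eq_iff)

lemma pre_rep_Wrep: "pre_rep (Wrep X Y)"
proof -
  have "vs_ax (rlie (Wrep X Y))"
    by (rule vs_ax_pointwise) (simp_all add: Wrep_def freeLie.intros)
  moreover have "vs_ax (rmod (Wrep X Y))"
    by (rule vs_ax_pointwise) (simp_all add: Wrep_def Amod_zero Amod_add Amod_smul)
  ultimately show ?thesis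
    unfolding pre_rep_def
    using aact_mem_Amod[OF subsetD[OF freeLie_subset_Apoly]]
    by (auto simp: Wrep_def freeLie.br aact_zero_right)
qed

theorem proposition7:
  fixes X Y :: "nat set" and H :: "('k::field_char_0, 'l, 'v) rep"
    and M :: "nat set" and Fm :: "('k, 'a) theta" and \<iota> :: "nat \<Rightarrow> 'a"
    and N :: "('k, 'n) theta"
  assumes "finite X" and "finite Y" and "card X = card Y" and "rep_alg H"
    and "finite M" and "theta_free TYPE('a) Fm M \<iota>" and "theta_free TYPE('n) Fm M \<iota>"
    and "theta_alg N"
  shows
    "(\<forall>T1 T2. rep_cong (Wrep X Y :: ('k, _, _) rep) (T1, T2) \<and> rep_closure (Wrep X Y) H (T1, T2) = (T1, T2)
        \<longrightarrow> theta_cong (Frep (Wrep X Y)) (T1 \<times> T2) \<and>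
            theta_closure (Frep (Wrep X Y)) (Frep H) (T1 \<times> T2) = T1 \<times> T2)
     \<and> (\<forall>T. theta_cong Fm T \<and> theta_closure Fm N T = T
        \<longrightarrow> rep_cong (Finv Fm) (T \<inter> pker Fm, T \<inter> pim Fm) \<and>
            rep_closure (Finv Fm) (Finv N) (T \<inter> pker Fm, T \<inter> pim Fm) = (T \<inter> pker Fm, T \<inter> pim Fm))
     \<and> bij_betw (\<lambda>(T1, T2). T1 \<times> T2) (Cl_rep (Wrep X Y :: ('k, _, _) rep) H)
         (Cl_theta (Frep (Wrep X Y)) (Frep H))
     \<and> bij_betw (\<lambda>T. (T \<inter> pker Fm, T \<inter> pim Fm)) (Cl_theta Fm N) (Cl_rep (Finv Fm) (Finv N))"
proof -
  have W: "pre_rep (Wrep X Y :: ('k, _, _) rep)" by (rule pre_rep_Wrep)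
  have H: "pre_rep H" using \<open>rep_alg H\<close> by (rule pre_rep_if_rep_alg)
  have Fm: "theta_alg Fm" using \<open>theta_free TYPE('a) Fm M \<iota>\<close> unfolding theta_free_def by blast
  interpret proj_lie_alg_pair Fm N
    unfolding proj_lie_alg_pair_def proj_lie_alg_def using Fm \<open>theta_alg N\<close> ..
  show ?thesis
  proof (intro conjI allI impI)
    fix T1 T2
    assume "rep_cong (Wrep X Y) (T1, T2) \<and> rep_closure (Wrep X Y) H (T1, T2) = (T1, T2)"
    then show "theta_cong (Frep (Wrep X Y)) (T1 \<times> T2)"
      "theta_closure (Frep (Wrep X Y)) (Frep H) (T1 \<times> T2) = T1 \<times> T2"
      using theta_cong_Frep_times times_mem_Cl_theta_Frep[OF W H, of "(T1, T2)"]
      unfolding Cl_rep_def Cl_theta_def by auto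
  next
    fix T assume "theta_cong Fm T \<and> theta_closure Fm N T = T"
    then show "rep_cong (Finv Fm) (T \<inter> pker Fm, T \<inter> pim Fm)"
      "rep_closure (Finv Fm) (Finv N) (T \<inter> pker Fm, T \<inter> pim Fm) = (T \<inter> pker Fm, T \<inter> pim Fm)"
      using rep_cong_Finv_Int[OF Fm] rep_closure_Finv_Int by auto
  qed (fact bij_betw_Cl_rep_Cl_theta_Frep[OF W H] bij_betw_Cl_theta_Cl_rep_Finv)+
qed

end
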